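(* Let $d\ge1$ be an integer and let $S_d:=\{\mathbf{x}\in\mathbb{R}^d: x_i\ge 0 \text{ for all } i,\ x_1+\cdots+x_d\le 1\}$. Let $\mathbf{p}_1,\ldots,\mathbf{p}_n$ be independent random points, each uniformly distributed in $S_d$, and let $Z_n$ be the number of dominating records of $\mathbf{p}_1,\ldots,\mathbf{p}_n$. Then \[ \mathbb{E}[Z_n]=\sum_{1\le k\le n}\frac{(d!)^k\,\Gamma(k)^d}{\Gamma(dk+1)}, \] \[ \mathbb{V}[Z_n]=2\sum_{2\le k\le n}\frac{(d!)^k\,\Gamma(k)^d}{\Gamma(dk+1)}H_{k-1}^{(d)}+\sum_{1\le k\le n}\frac{(d!)^k\,\Gamma(k)^d}{\Gamma(dk+1)}-\left(\sum_{1\le k\le n}\frac{(d!)^k\,\Gamma(k)^d}{\Gamma(dk+1)}\right)^2, \] where $H_m^{(a)}=\sum_{i=1}^m i^{-a}$. Moreover, if instead $\mathbf{p}_1,\ldots,\mathbf{p}_n$ are independent and uniformly distributed in the hypercube $[0,1]^d$, then the number $Z_n$ of dominating records satisfies $\mathbb{E}[Z_n]=H_n^{(d)}$ and $\mathbb{V}[Z_n]=H_n^{(d)}-H_n^{(2d)}$.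
   Context: For $\mathbf{p},\mathbf{q}\in\mathbb{R}^d$, $\mathbf{p}$ dominates $\mathbf{q}$ (written $\mathbf{q}\prec\mathbf{p}$) if every coordinate of $\mathbf{p}-\mathbf{q}$ is strictly positive. A point $\mathbf{p}_k$ is a dominating record of the sequence $\mathbf{p}_1,\ldots,\mathbf{p}_n$ if $\mathbf{p}_i\prec\mathbf{p}_k$ for all $1\le i<k$ (so $\mathbf{p}_1$ is always a dominating record). *)

theory Defs
  imports "HOL-Analysis.Analysis" "HOL-Probability.Probability"
begin

definition dominated_by :: "real^'d \<Rightarrow> real^'d \<Rightarrow> bool" where
  "dominated_by q p \<longleftrightarrow> (\<forall>i. q $ i < p $ i)"

definition std_simplex :: "(real^'d) set" where
  "std_simplex = {x. (\<forall>i. 0 \<le> x $ i) \<and> (\<Sum>i\<in>UNIV. x $ i) \<le> 1}"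

definition unit_cube :: "(real^'d) set" where
  "unit_cube = {x. \<forall>i. 0 \<le> x $ i \<and> x $ i \<le> 1}"

definition num_dom_records :: "nat \<Rightarrow> (nat \<Rightarrow> real^'d) \<Rightarrow> nat" where
  "num_dom_records n p = card {k \<in> {1..n}. \<forall>i\<in>{1..<k}. dominated_by (p i) (p k)}"

definition gen_harm :: "nat \<Rightarrow> nat \<Rightarrow> real" where
  "gen_harm a m = (\<Sum>i=1..m. 1 / real i ^ a)"

definition iid_uniform :: "nat \<Rightarrow> (real^'d) set \<Rightarrow> (nat \<Rightarrow> real^'d) measure" where
  "iid_uniform n S = PiM {1..n} (\<lambda>_. uniform_measure lborel S)"

definition rec_mean :: "(nat \<Rightarrow> real^'d) measure \<Rightarrow> nat \<Rightarrow> real" where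
  "rec_mean M n = (LINT p|M. real (num_dom_records n p))"

definition rec_var :: "(nat \<Rightarrow> real^'d) measure \<Rightarrow> nat \<Rightarrow> real" where
  "rec_var M n = (LINT p|M. (real (num_dom_records n p) - rec_mean M n)\<^sup>2)"

end

theory Submission
  imports Defs
begin

(* The number of records is the sum of the indicators of the events R_k = "p_k is a record",
so its mean and variance are determined by P(R_k) and P(R_j \<inter> R_k). Write F(x) for the
probability that a single point is dominated by x. Integrating out all points but p_k gives
P(R_k) = E F(p)^(k-1). For j < k, transitivity of domination reduces R_j \<inter> R_k to
"p_j \<prec> p_k, p_i \<prec> p_j for i < j, and p_i \<prec> p_k for j < i < k", which gives
P(R_j \<inter> R_k) = E [F(p)^(k-1-j) \<integral>_{y \<prec> p} F(y)^(j-1)].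
For uniform points in a downward closed region S of the positive orthant, S \<inter> {z. z \<prec> x} is the
box [0, x), so F(x) = x_1 \<cdots> x_d / vol S. Both probabilities then reduce to the moments
\<integral>_S (x_1 \<cdots> x_d)^m, and integrating over the box yields P(R_j \<inter> R_k) = P(R_k) / j^d.
The moments are 1/(m+1)^d for the cube and the Dirichlet integrals (m!)^d / (d(m+1))! for the
simplex. *)

section \<open>Sums of indicator functions\<close>

lemma sum_square_of_idempotent:
  fixes f :: "nat \<Rightarrow> 'a::comm_ring_1"
  assumes "\<And>k. f k * f k = f k"
  shows "(\<Sum>k=1..n. f k)\<^sup>2 = (\<Sum>k=1..n. f k) + 2 * (\<Sum>k=1..n. \<Sum>j=1..<k. f j * f k)"
proof (induction n)
  case (Suc n)
  have "(\<Sum>j=1..<Suc n. f j * f (Suc n)) = (\<Sum>k=1..n. f k) * f (Suc n)"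
    by (simp add: sum_distrib_right atLeastLessThanSuc_atLeastAtMost)
  with Suc assms[of "Suc n"] show ?case
    by (simp add: power2_eq_square algebra_simps)
qed simp

context prob_space
begin

lemma
  fixes n :: nat
  assumes A: "\<And>k. k \<in> {1..n} \<Longrightarrow> A k \<in> events"
  defines "Z \<equiv> \<lambda>x. \<Sum>k=1..n. indicator (A k) x :: real"
  shows expectation_sum_indicator: "expectation Z = (\<Sum>k=1..n. prob (A k))"
    and variance_sum_indicator: "variance Z =
      (\<Sum>k=1..n. prob (A k)) + 2 * (\<Sum>k=1..n. \<Sum>j=1..<k. prob (A j \<inter> A k)) - (\<Sum>k=1..n. prob (A k))\<^sup>2"
proof -
  have int_indicator: "integrable M (indicator (A j \<inter> A k) :: _ \<Rightarrow> real)"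
    if "j \<in> {1..n}" "k \<in> {1..n}" for j k
    using A[OF that(1)] A[OF that(2)] by (intro integrable_real_indicator) (auto simp: less_top[symmetric])
  have int_pairs: "integrable M (\<lambda>x. \<Sum>k=1..n. \<Sum>j=1..<k. indicator (A j \<inter> A k) x :: real)"
    by (intro Bochner_Integration.integrable_sum int_indicator) auto
  have exp_inner: "expectation (\<lambda>x. \<Sum>j=1..<k. indicator (A j \<inter> A k) x :: real)
      = (\<Sum>j=1..<k. prob (A j \<inter> A k))" if "k \<in> {1..n}" for k
    using that A by (subst Bochner_Integration.integral_sum) (auto intro!: int_indicator sum.cong)
  have "expectation (\<lambda>x. \<Sum>k=1..n. \<Sum>j=1..<k. indicator (A j \<inter> A k) x :: real)
      = (\<Sum>k=1..n. expectation (\<lambda>x. \<Sum>j=1..<k. indicator (A j \<inter> A k) x :: real))"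
    by (rule Bochner_Integration.integral_sum)
       (auto intro!: Bochner_Integration.integrable_sum int_indicator)
  with exp_inner have exp_pairs: "expectation (\<lambda>x. \<Sum>k=1..n. \<Sum>j=1..<k. indicator (A j \<inter> A k) x :: real)
      = (\<Sum>k=1..n. \<Sum>j=1..<k. prob (A j \<inter> A k))"
    by simp
  have Z: "integrable M Z" "expectation Z = (\<Sum>k=1..n. prob (A k))"
    using int_indicator[of k k for k] A by (auto simp: Z_def intro!: sum.cong)
  then show "expectation Z = (\<Sum>k=1..n. prob (A k))" by simp
  have Z_square: "(Z x)\<^sup>2 = Z x + 2 * (\<Sum>k=1..n. \<Sum>j=1..<k. indicator (A j \<inter> A k) x)" for x
    unfolding Z_def indicator_inter_arith by (rule sum_square_of_idempotent) (simp add: indicator_def)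
  have Z_square_int: "integrable M (\<lambda>x. (Z x)\<^sup>2)"
    unfolding Z_square by (intro Bochner_Integration.integrable_add integrable_mult_right Z int_pairs)
  have Z_square_exp: "expectation (\<lambda>x. (Z x)\<^sup>2)
      = (\<Sum>k=1..n. prob (A k)) + 2 * (\<Sum>k=1..n. \<Sum>j=1..<k. prob (A j \<inter> A k))"
    unfolding Z_square using Z int_pairs exp_pairs by simp
  show "variance Z = (\<Sum>k=1..n. prob (A k)) + 2 * (\<Sum>k=1..n. \<Sum>j=1..<k. prob (A j \<inter> A k))
      - (\<Sum>k=1..n. prob (A k))\<^sup>2"
    using variance_eq[OF Z(1) Z_square_int] unfolding Z_square_exp Z(2) .
qed

end

section \<open>Records of independent identically distributed points\<close>

lemma borel_measurable_vec_nth[measurable (raw)]: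
  "f \<in> borel_measurable M \<Longrightarrow> (\<lambda>x. f x $ i :: real) \<in> borel_measurable M"
  using measurable_compose[OF _ borel_measurable_nth] .

lemma pred_dominated_by[measurable (raw)]:
  assumes [measurable]: "f \<in> borel_measurable M" "g \<in> borel_measurable M"
  shows "Measurable.pred M (\<lambda>x. dominated_by (f x) (g x :: real^'d))"
  unfolding dominated_by_def by measurable

lemma dominated_by_trans: "dominated_by a b \<Longrightarrow> dominated_by b c \<Longrightarrow> dominated_by a c"
  unfolding dominated_by_def using less_trans by blast

lemma prod_of_bool_ennreal:
  "finite A \<Longrightarrow> (\<Prod>i\<in>A. of_bool (P i) :: ennreal) = of_bool (\<forall>i\<in>A. P i)"
  by (induction A rule: finite_induct) auto

lemma dominating_record_pair_iff:
  fixes j k :: nat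
  assumes "1 \<le> j" "j < k"
  shows "(\<forall>i\<in>{1..<j}. dominated_by (p i) (p j)) \<and> (\<forall>i\<in>{1..<k}. dominated_by (p i) (p k))
    \<longleftrightarrow> dominated_by (p j) (p k) \<and> (\<forall>i\<in>{1..<j}. dominated_by (p i) (p j))
        \<and> (\<forall>i\<in>{j<..<k}. dominated_by (p i) (p k))"
proof safe
  fix i assume "\<forall>i\<in>{1..<j}. dominated_by (p i) (p j)" "dominated_by (p j) (p k)"
    "\<forall>i\<in>{j<..<k}. dominated_by (p i) (p k)" "i \<in> {1..<k}"
  then show "dominated_by (p i) (p k)"
    by (cases i j rule: linorder_cases) (auto intro: dominated_by_trans[of _ "p j"])
qed (use assms in auto)

locale record_model = prob_space \<mu> for \<mu> :: "(real^'d) measure" +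
  assumes sets_eq_borel[measurable_cong]: "sets \<mu> = sets borel"
begin

lemma space_eq_UNIV[simp]: "space \<mu> = UNIV"
  using sets_eq_imp_space_eq[OF sets_eq_borel] by simp

sublocale product_sigma_finite "\<lambda>_::nat. \<mu>"
  by unfold_locales

definition dominated_prob :: "real^'d \<Rightarrow> ennreal" where
  "dominated_prob x = emeasure \<mu> {z. dominated_by z x}"

abbreviation sample :: "nat \<Rightarrow> (nat \<Rightarrow> real^'d) measure" where
  "sample n \<equiv> PiM {1..n} (\<lambda>_. \<mu>)"

definition record_event :: "nat \<Rightarrow> nat \<Rightarrow> (nat \<Rightarrow> real^'d) set" where
  "record_event n k = {p \<in> space (sample n). \<forall>i\<in>{1..<k}. dominated_by (p i) (p k)}"

lemma dominated_prob_measurable[measurable]: "dominated_prob \<in> borel_measurable \<mu>"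
  unfolding dominated_prob_def by (rule measurable_emeasure) (simp, measurable)

lemma record_event_sets: "k \<in> {1..n} \<Longrightarrow> record_event n k \<in> sets (sample n)"
  unfolding record_event_def by measurable

lemma nn_integral_PiM_pivot:
  fixes g :: "real^'d \<Rightarrow> ennreal" and h :: "nat \<Rightarrow> real^'d \<Rightarrow> real^'d \<Rightarrow> ennreal"
  assumes I: "finite I" "k \<in> I"
    and [measurable]: "g \<in> borel_measurable \<mu>"
    and [measurable]: "\<And>i. (\<lambda>(z, x). h i z x) \<in> borel_measurable (\<mu> \<Otimes>\<^sub>M \<mu>)"
  shows "(\<integral>\<^sup>+p. g (p k) * (\<Prod>i\<in>I-{k}. h i (p i) (p k)) \<partial>PiM I (\<lambda>_. \<mu>))
       = (\<integral>\<^sup>+x. g x * (\<Prod>i\<in>I-{k}. \<integral>\<^sup>+z. h i z x \<partial>\<mu>) \<partial>\<mu>)"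
proof -
  have "(\<integral>\<^sup>+p. g (p k) * (\<Prod>i\<in>I-{k}. h i (p i) (p k)) \<partial>PiM (insert k (I-{k})) (\<lambda>_. \<mu>))
     = (\<integral>\<^sup>+x. (\<integral>\<^sup>+q. g x * (\<Prod>i\<in>I-{k}. h i (q i) x) \<partial>PiM (I-{k}) (\<lambda>_. \<mu>)) \<partial>\<mu>)"
    using I by (subst product_nn_integral_insert_rev) (auto intro!: nn_integral_cong prod.cong)
  also have "\<dots> = (\<integral>\<^sup>+x. g x * (\<integral>\<^sup>+q. (\<Prod>i\<in>I-{k}. h i (q i) x) \<partial>PiM (I-{k}) (\<lambda>_. \<mu>)) \<partial>\<mu>)"
    by (intro nn_integral_cong nn_integral_cmult) measurable
  also have "\<dots> = (\<integral>\<^sup>+x. g x * (\<Prod>i\<in>I-{k}. \<integral>\<^sup>+z. h i z x \<partial>\<mu>) \<partial>\<mu>)"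
    using I by (intro nn_integral_cong arg_cong2[where f="(*)"] refl product_nn_integral_prod) auto
  finally show ?thesis
    using I by (simp add: insert_absorb)
qed

lemma emeasure_UNIV[simp]: "emeasure \<mu> UNIV = 1"
  using emeasure_space_1 by simp

lemma nn_integral_dominated[simp]: "(\<integral>\<^sup>+z. of_bool (dominated_by z x) \<partial>\<mu>) = dominated_prob x"
proof -
  have "(\<integral>\<^sup>+z. of_bool (dominated_by z x) \<partial>\<mu>) = (\<integral>\<^sup>+z. indicator {z. dominated_by z x} z \<partial>\<mu>)"
    by (simp add: indicator_def)
  then show ?thesis
    by (simp add: dominated_prob_def)
qed

lemma emeasure_record_event:
  assumes k: "k \<in> {1..n}"
  shows "emeasure (sample n) (record_event n k) = (\<integral>\<^sup>+x. dominated_prob x ^ (k-1) \<partial>\<mu>)"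
proof -
  let ?h = "\<lambda>i z x. of_bool (i < k \<longrightarrow> dominated_by z x) :: ennreal"
  have "emeasure (sample n) (record_event n k)
      = (\<integral>\<^sup>+p. 1 * (\<Prod>i\<in>{1..n}-{k}. ?h i (p i) (p k)) \<partial>sample n)"
  proof (subst nn_integral_indicator[symmetric, OF record_event_sets[OF k]], intro nn_integral_cong)
    fix p assume "p \<in> space (sample n)"
    moreover have "{1..<k} = {i\<in>{1..n}-{k}. i < k}" using k by auto
    ultimately show "indicator (record_event n k) p = 1 * (\<Prod>i\<in>{1..n}-{k}. ?h i (p i) (p k))"
      by (auto simp: prod_of_bool_ennreal record_event_def indicator_def)
  qed
  also have "\<dots> = (\<integral>\<^sup>+x. 1 * (\<Prod>i\<in>{1..n}-{k}. \<integral>\<^sup>+z. ?h i z x \<partial>\<mu>) \<partial>\<mu>)"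
    using k by (intro nn_integral_PiM_pivot) auto
  also have "\<dots> = (\<integral>\<^sup>+x. dominated_prob x ^ (k-1) \<partial>\<mu>)"
  proof (intro nn_integral_cong)
    fix x
    have "{1..n} - {k} = {1..<k} \<union> {k<..n}" and disj: "{1..<k} \<inter> {k<..n} = {}"
      using k by auto
    then have "(\<Prod>i\<in>{1..n}-{k}. \<integral>\<^sup>+z. ?h i z x \<partial>\<mu>)
      = (\<Prod>i\<in>{1..<k}. \<integral>\<^sup>+z. ?h i z x \<partial>\<mu>) * (\<Prod>i\<in>{k<..n}. \<integral>\<^sup>+z. ?h i z x \<partial>\<mu>)"
      by (simp only: prod.union_disjoint[OF _ _ disj] finite_atLeastLessThan finite_greaterThanAtMost)
    then show "1 * (\<Prod>i\<in>{1..n}-{k}. \<integral>\<^sup>+z. ?h i z x \<partial>\<mu>) = dominated_prob x ^ (k-1)"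
      by simp
  qed
  finally show ?thesis .
qed

lemma indicator_record_event_pair_upd:
  assumes jk: "1 \<le> j" "j < k" "k \<le> n" and q: "q \<in> space (PiM ({1..n} - {k}) (\<lambda>_. \<mu>))"
  shows "indicator (record_event n j \<inter> record_event n k) (q(k:=y))
    = indicator {w. dominated_by w y} (q j) * (\<Prod>i\<in>{1..n}-{k}-{j}.
        of_bool (i < k \<and> i \<noteq> j \<longrightarrow> dominated_by (q i) (if i < j then q j else y)) :: ennreal)"
proof -
  have "{1..n} - {k} - {j} = {1..<j} \<union> ({j<..<k} \<union> {k<..n})"
    using jk by auto
  moreover have "q(k:=y) \<in> space (sample n)"
    using q jk by (auto simp: space_PiM PiE_def extensional_def)
  ultimately have "q(k:=y) \<in> record_event n j \<inter> record_event n k \<longleftrightarrow> dominated_by (q j) y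
      \<and> (\<forall>i\<in>{1..n}-{k}-{j}. i < k \<and> i \<noteq> j \<longrightarrow> dominated_by (q i) (if i < j then q j else y))"
    using dominating_record_pair_iff[OF jk(1,2), of "q(k:=y)"] jk
    by (auto simp: record_event_def)
  then show ?thesis
    by (simp add: indicator_def prod_of_bool_ennreal)
qed

lemma prod_nn_integral_record_pair_factors:
  assumes jk: "1 \<le> j" "j < k" "k \<le> n"
  shows "(\<Prod>i\<in>{1..n}-{k}-{j}.
      \<integral>\<^sup>+z. of_bool (i < k \<and> i \<noteq> j \<longrightarrow> dominated_by z (if i < j then w else y)) \<partial>\<mu>)
    = dominated_prob w ^ (j-1) * dominated_prob y ^ (k-1-j)"
proof -
  have "{1..n} - {k} - {j} = {1..<j} \<union> ({j<..<k} \<union> {k<..n})"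
    and disj: "{1..<j} \<inter> ({j<..<k} \<union> {k<..n}) = {}" "{j<..<k} \<inter> {k<..n} = {}"
    using jk by auto
  then have "(\<Prod>i\<in>{1..n}-{k}-{j}.
      \<integral>\<^sup>+z. of_bool (i < k \<and> i \<noteq> j \<longrightarrow> dominated_by z (if i < j then w else y)) \<partial>\<mu>)
    = (\<Prod>i\<in>{1..<j}. \<integral>\<^sup>+z. of_bool (dominated_by z w) \<partial>\<mu>)
      * ((\<Prod>i\<in>{j<..<k}. \<integral>\<^sup>+z. of_bool (dominated_by z y) \<partial>\<mu>) * (\<Prod>i\<in>{k<..n}. 1))"
    by (simp only: prod.union_disjoint[OF _ _ disj(1)] prod.union_disjoint[OF _ _ disj(2)]
        finite_Un finite_atLeastLessThan finite_greaterThanLessThan finite_greaterThanAtMost)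
      (use jk in \<open>auto intro!: arg_cong2[where f="(*)"] prod.cong\<close>)
  then show ?thesis
    using jk by simp
qed

lemma emeasure_record_event_pair:
  assumes jk: "1 \<le> j" "j < k" "k \<le> n"
  shows "emeasure (sample n) (record_event n j \<inter> record_event n k)
    = (\<integral>\<^sup>+x. dominated_prob x ^ (k-1-j) * (\<integral>\<^sup>+y\<in>{y. dominated_by y x}. dominated_prob y ^ (j-1) \<partial>\<mu>) \<partial>\<mu>)"
proof -
  let ?R = "record_event n j \<inter> record_event n k"
  let ?J = "{1..n} - {k}"
  let ?H = "\<lambda>i z w y. of_bool (i < k \<and> i \<noteq> j \<longrightarrow> dominated_by z (if i < j then w else y)) :: ennreal"
  have I: "{1..n} = insert k ?J"
    using jk by auto
  have R: "?R \<in> sets (sample n)"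
    using record_event_sets[of j n] record_event_sets[of k n] jk by auto
  have "emeasure (sample n) ?R = (\<integral>\<^sup>+p. indicator ?R p \<partial>PiM (insert k ?J) (\<lambda>_. \<mu>))"
    unfolding I[symmetric] using R by simp
  also have "\<dots> = (\<integral>\<^sup>+y. (\<integral>\<^sup>+q. indicator ?R (q(k:=y)) \<partial>PiM ?J (\<lambda>_. \<mu>)) \<partial>\<mu>)"
  proof (rule product_nn_integral_insert_rev)
    show "indicator ?R \<in> borel_measurable (PiM (insert k ?J) (\<lambda>_. \<mu>))"
      unfolding I[symmetric] using R by simp
  qed auto
  also have "\<dots> = (\<integral>\<^sup>+y. (\<integral>\<^sup>+q. indicator {w. dominated_by w y} (q j)
      * (\<Prod>i\<in>?J-{j}. ?H i (q i) (q j) y) \<partial>PiM ?J (\<lambda>_. \<mu>)) \<partial>\<mu>)"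
    using jk by (intro nn_integral_cong indicator_record_event_pair_upd) auto
  also have "\<dots> = (\<integral>\<^sup>+y. (\<integral>\<^sup>+w. indicator {w. dominated_by w y} w
      * (\<Prod>i\<in>?J-{j}. \<integral>\<^sup>+z. ?H i z w y \<partial>\<mu>) \<partial>\<mu>) \<partial>\<mu>)"
    using jk by (intro nn_integral_cong nn_integral_PiM_pivot) auto
  also have "\<dots> = (\<integral>\<^sup>+y. (\<integral>\<^sup>+w. dominated_prob y ^ (k-1-j)
      * (dominated_prob w ^ (j-1) * indicator {w. dominated_by w y} w) \<partial>\<mu>) \<partial>\<mu>)"
    by (intro nn_integral_cong) (simp only: prod_nn_integral_record_pair_factors[OF jk] mult_ac)
  also have "\<dots> = (\<integral>\<^sup>+x. dominated_prob x ^ (k-1-j)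
      * (\<integral>\<^sup>+y\<in>{y. dominated_by y x}. dominated_prob y ^ (j-1) \<partial>\<mu>) \<partial>\<mu>)"
    by (intro nn_integral_cong nn_integral_cmult) measurable
  finally show ?thesis .
qed

lemma num_dom_records_eq_sum_indicator:
  "real (num_dom_records n p) = (\<Sum>k=1..n. indicator (record_event n k) p)"
  if "p \<in> space (sample n)"
proof -
  have "real (num_dom_records n p) = (\<Sum>k\<in>{k\<in>{1..n}. \<forall>i\<in>{1..<k}. dominated_by (p i) (p k)}. 1)"
    unfolding num_dom_records_def by simp
  also have "\<dots> = (\<Sum>k=1..n. if \<forall>i\<in>{1..<k}. dominated_by (p i) (p k) then 1 else 0)"
    by (rule sum.inter_filter) simp
  also have "\<dots> = (\<Sum>k=1..n. indicator (record_event n k) p)"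
    using that by (intro sum.cong) (auto simp: record_event_def)
  finally show ?thesis .
qed

lemma rec_mean_var_sample:
  fixes c :: "nat \<Rightarrow> real" and d :: nat
  assumes single: "\<And>k. 1 \<le> k \<Longrightarrow> (\<integral>\<^sup>+x. dominated_prob x ^ (k-1) \<partial>\<mu>) = ennreal (c k)"
    and pair: "\<And>j k. 1 \<le> j \<Longrightarrow> j < k \<Longrightarrow> (\<integral>\<^sup>+x. dominated_prob x ^ (k-1-j)
        * (\<integral>\<^sup>+y\<in>{y. dominated_by y x}. dominated_prob y ^ (j-1) \<partial>\<mu>) \<partial>\<mu>) = ennreal (c k / real j ^ d)"
    and nonneg: "\<And>k. 1 \<le> k \<Longrightarrow> 0 \<le> c k"
  shows "rec_mean (sample n) n = (\<Sum>k=1..n. c k)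
    \<and> rec_var (sample n) n = 2 * (\<Sum>k=2..n. c k * gen_harm d (k - 1)) + (\<Sum>k=1..n. c k) - (\<Sum>k=1..n. c k)\<^sup>2"
proof -
  interpret P: prob_space "sample n"
    by (rule prob_space_PiM) (rule prob_space_axioms)
  define Z where "Z = (\<lambda>p. \<Sum>k=1..n. indicator (record_event n k) p :: real)"
  have mean: "rec_mean (sample n) n = P.expectation Z"
    unfolding rec_mean_def Z_def by (rule Bochner_Integration.integral_cong) (simp_all add: num_dom_records_eq_sum_indicator)
  have var: "rec_var (sample n) n = P.variance Z"
    unfolding rec_var_def mean Z_def by (rule Bochner_Integration.integral_cong) (simp_all add: num_dom_records_eq_sum_indicator)
  have prob_single: "P.prob (record_event n k) = c k" if "k \<in> {1..n}" for k
    using emeasure_record_event[OF that] single[of k] that nonneg[of k] by (simp add: measure_def)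
  have prob_pair: "(\<Sum>j=1..<k. P.prob (record_event n j \<inter> record_event n k)) = c k * gen_harm d (k - 1)"
    if "k \<in> {1..n}" for k
  proof -
    have "(\<Sum>j=1..<k. P.prob (record_event n j \<inter> record_event n k)) = (\<Sum>j=1..<k. c k / real j ^ d)"
      using that emeasure_record_event_pair pair nonneg by (intro sum.cong) (auto simp: measure_def)
    also have "\<dots> = c k * gen_harm d (k - 1)"
      using that by (cases k) (simp_all add: gen_harm_def sum_distrib_left atLeastLessThanSuc_atLeastAtMost)
    finally show ?thesis .
  qed
  have "(\<Sum>k=1..n. c k * gen_harm d (k - 1)) = (\<Sum>k=2..n. c k * gen_harm d (k - 1))"
    by (rule sum.mono_neutral_right) (auto simp: gen_harm_def)
  moreover have "P.expectation Z = (\<Sum>k=1..n. P.prob (record_event n k))"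
    unfolding Z_def by (rule P.expectation_sum_indicator[OF record_event_sets])
  moreover have "P.variance Z = (\<Sum>k=1..n. P.prob (record_event n k))
      + 2 * (\<Sum>k=1..n. \<Sum>j=1..<k. P.prob (record_event n j \<inter> record_event n k))
      - (\<Sum>k=1..n. P.prob (record_event n k))\<^sup>2"
    unfolding Z_def by (rule P.variance_sum_indicator[OF record_event_sets])
  ultimately show ?thesis
    unfolding mean var using prob_single prob_pair by simp
qed

end

section \<open>Beta and Dirichlet integrals\<close>

lemma nn_integral_beta_nat:
  fixes p q :: nat
  shows "(\<integral>\<^sup>+s\<in>{0..1}. ennreal (s ^ p * (1 - s) ^ q) \<partial>lborel) = ennreal (fact p * fact q / fact (p + q + 1))"
proof -
  have "((\<lambda>t. t powr (real (p+1) - 1) * (1 - t) powr (real (q+1) - 1)) has_integral Beta (real (p+1)) (real (q+1))) {0<..<1}"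
    using has_integral_Beta_real[of "real (p+1)" "real (q+1)"] by (simp add: has_integral_Icc_iff_Ioo)
  then have "((\<lambda>t. t ^ p * (1 - t) ^ q) has_integral Beta (real (p+1)) (real (q+1))) {0<..<1}"
    by (rule has_integral_cong[THEN iffD1, rotated]) (auto simp: powr_realpow)
  then have beta: "((\<lambda>t. t ^ p * (1 - t) ^ q) has_integral Beta (real (p+1)) (real (q+1))) {0..1}"
    by (simp add: has_integral_Icc_iff_Ioo)
  have "(\<integral>\<^sup>+s\<in>{0..1}. ennreal (s ^ p * (1 - s) ^ q) \<partial>lborel) = ennreal (Beta (real (p+1)) (real (q+1)))"
    by (rule nn_integral_has_integral_lebesgue'[OF _ beta]) auto
  also have "Beta (real (p+1)) (real (q+1)) = fact p * fact q / fact (p + q + 1)"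
    using Gamma_fact[of p, where 'a=real] Gamma_fact[of q, where 'a=real] Gamma_fact[of "p+q+1", where 'a=real]
    by (simp add: Beta_def add_ac)
  finally show ?thesis .
qed

lemma nn_integral_beta_nat_scaled:
  fixes p q :: nat and t :: real
  assumes "0 \<le> t"
  shows "(\<integral>\<^sup>+y\<in>{0..t}. ennreal (y ^ p * (t - y) ^ q) \<partial>lborel)
       = ennreal (t ^ (p + q + 1) * fact p * fact q / fact (p + q + 1))"
proof (cases "t = 0")
  case True
  have "AE y in lborel. ennreal (y ^ p * (t - y) ^ q) * indicator {0..t} y = 0"
    using AE_lborel_singleton[of 0] by eventually_elim (auto simp: True indicator_def)
  from nn_integral_cong_AE[OF this] show ?thesis using True by simp
next
  case False
  with assms have t: "0 < t" by simp
  have "(\<integral>\<^sup>+y\<in>{0..t}. ennreal (y ^ p * (t - y) ^ q) \<partial>lborel)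
      = ennreal t * (\<integral>\<^sup>+s. ennreal ((0 + t * s) ^ p * (t - (0 + t * s)) ^ q) * indicator {0..t} (0 + t * s) \<partial>lborel)"
    using t by (subst nn_integral_real_affine[where c=t and t=0]) auto
  also have "(\<integral>\<^sup>+s. ennreal ((0 + t * s) ^ p * (t - (0 + t * s)) ^ q) * indicator {0..t} (0 + t * s) \<partial>lborel)
      = (\<integral>\<^sup>+s. ennreal (t ^ (p + q)) * (ennreal (s ^ p * (1 - s) ^ q) * indicator {0..1} s) \<partial>lborel)"
  proof (intro nn_integral_cong)
    fix s :: real
    have "t * s \<in> {0..t} \<longleftrightarrow> s \<in> {0..1}"
      using t by (auto simp: zero_le_mult_iff mult_le_cancel_left1)
    moreover have "t - t * s = t * (1 - s)"
      by (simp add: algebra_simps)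
    then have "(t * s) ^ p * (t - t * s) ^ q = t ^ (p + q) * (s ^ p * (1 - s) ^ q)"
      by (simp only: power_mult_distrib power_add mult_ac)
    ultimately show "ennreal ((0 + t * s) ^ p * (t - (0 + t * s)) ^ q) * indicator {0..t} (0 + t * s)
        = ennreal (t ^ (p + q)) * (ennreal (s ^ p * (1 - s) ^ q) * indicator {0..1} s)"
      using t by (auto simp: indicator_def ennreal_mult)
  qed
  also have "\<dots> = ennreal (t ^ (p + q)) * ennreal (fact p * fact q / fact (p + q + 1))"
    by (subst nn_integral_cmult) (auto simp: nn_integral_beta_nat)
  finally show ?thesis
    using t by (simp add: ennreal_mult[symmetric] power_add mult_ac)
qed

definition simplex_monomial :: "'a set \<Rightarrow> nat \<Rightarrow> real \<Rightarrow> ('a \<Rightarrow> real) \<Rightarrow> ennreal" where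
  "simplex_monomial A m t x =
    (if (\<forall>i\<in>A. 0 \<le> x i) \<and> sum x A \<le> t then ennreal (\<Prod>i\<in>A. x i ^ m) else 0)"

lemma simplex_monomial_measurable[measurable]:
  "finite A \<Longrightarrow> simplex_monomial A m t \<in> borel_measurable (PiM A (\<lambda>_. lborel))"
  unfolding simplex_monomial_def by measurable

lemma simplex_monomial_insert:
  assumes "finite A" "b \<notin> A"
  shows "simplex_monomial (insert b A) m t (x(b:=y))
    = ennreal (y ^ m) * indicator {0..t} y * simplex_monomial A m (t - y) x"
proof -
  have "sum (x(b:=y)) A = sum x A" "(\<Prod>i\<in>A. (x(b:=y)) i ^ m) = (\<Prod>i\<in>A. x i ^ m)"
    using assms by (auto intro!: sum.cong prod.cong)
  then have sum: "sum (x(b:=y)) (insert b A) = y + sum x A"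
    and prod: "(\<Prod>i\<in>insert b A. (x(b:=y)) i ^ m) = y ^ m * (\<Prod>i\<in>A. x i ^ m)"
    and nonneg: "(\<forall>i\<in>insert b A. 0 \<le> (x(b:=y)) i) \<longleftrightarrow> 0 \<le> y \<and> (\<forall>i\<in>A. 0 \<le> x i)"
    using assms by auto
  have "y \<le> t" if "\<forall>i\<in>A. 0 \<le> x i" "y + sum x A \<le> t"
  proof -
    have "0 \<le> sum x A" using that(1) by (simp add: sum_nonneg)
    with that(2) show ?thesis by linarith
  qed
  then show ?thesis
    unfolding simplex_monomial_def sum prod nonneg
    by (auto simp: indicator_def ennreal_mult prod_nonneg)
qed

lemma nn_integral_simplex_monomial:
  assumes "finite A" "0 \<le> t"
  shows "(\<integral>\<^sup>+x. simplex_monomial A m t x \<partial>PiM A (\<lambda>_. lborel))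
       = ennreal (t ^ (card A * (m+1)) * fact m ^ card A / fact (card A * (m+1)))"
  using assms
proof (induction arbitrary: t rule: finite_induct)
  case empty
  then show ?case by (simp add: PiM_empty simplex_monomial_def)
next
  case (insert b A t)
  (* Fixing the new coordinate y leaves a simplex of radius t - y, so each step is a Beta integral. *)
  interpret product_sigma_finite "\<lambda>_. lborel :: real measure" by standard
  define q where "q = card A * (m + 1)"
  define C :: real where "C = fact m ^ card A / fact q"
  have "(\<integral>\<^sup>+x. simplex_monomial (insert b A) m t x \<partial>PiM (insert b A) (\<lambda>_. lborel))
     = (\<integral>\<^sup>+y. (\<integral>\<^sup>+x. ennreal (y ^ m) * indicator {0..t} y * simplex_monomial A m (t - y) x
         \<partial>PiM A (\<lambda>_. lborel)) \<partial>lborel)"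
    using insert by (subst product_nn_integral_insert_rev) (auto simp: simplex_monomial_insert)
  also have "\<dots> = (\<integral>\<^sup>+y\<in>{0..t}. ennreal C * ennreal (y ^ m * (t - y) ^ q) \<partial>lborel)"
    using insert by (intro nn_integral_cong)
      (auto simp: nn_integral_cmult indicator_def C_def q_def ennreal_mult[symmetric] mult_ac)
  also have "\<dots> = ennreal C * (\<integral>\<^sup>+y\<in>{0..t}. ennreal (y ^ m * (t - y) ^ q) \<partial>lborel)"
    by (simp add: mult.assoc nn_integral_cmult)
  also have "\<dots> = ennreal C * ennreal (t ^ (m + q + 1) * fact m * fact q / fact (m + q + 1))"
    using insert.prems by (simp add: nn_integral_beta_nat_scaled)
  also have "\<dots> = ennreal (t ^ (card (insert b A) * (m+1)) * fact m ^ card (insert b A)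
      / fact (card (insert b A) * (m+1)))"
    using insert by (simp add: q_def C_def ennreal_mult[symmetric] mult_ac)
  finally show ?case .
qed

lemma nn_integral_power_Icc:
  assumes "0 \<le> a"
  shows "(\<integral>\<^sup>+t\<in>{0..a}. ennreal (t ^ m) \<partial>lborel) = ennreal (a ^ (m+1) / (real m + 1))"
  using nn_integral_beta_nat_scaled[OF assms, of m 0] by (simp add: fact_Suc add.commute)

lemma nn_integral_power_Ico:
  assumes "0 \<le> a"
  shows "(\<integral>\<^sup>+t\<in>{0..<a}. ennreal (t ^ m) \<partial>lborel) = ennreal (a ^ (m+1) / (real m + 1))"
proof -
  have "AE t in lborel. ennreal (t ^ m) * indicator {0..<a} t = ennreal (t ^ m) * indicator {0..a} t"
    using AE_lborel_singleton[of a] by eventually_elim (auto simp: indicator_def)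
  then show ?thesis
    using nn_integral_power_Icc[OF assms] by (simp add: nn_integral_cong_AE)
qed

definition coord_prod :: "'a::euclidean_space \<Rightarrow> real" where
  "coord_prod x = (\<Prod>b\<in>Basis. x \<bullet> b)"

lemma coord_prod_measurable[measurable]: "coord_prod \<in> borel_measurable borel"
  unfolding coord_prod_def by measurable

lemma coord_prod_nonneg: "(\<And>b. b \<in> Basis \<Longrightarrow> 0 \<le> x \<bullet> b) \<Longrightarrow> 0 \<le> coord_prod x"
  unfolding coord_prod_def by (rule prod_nonneg) auto

lemma nn_integral_coord_prod_power_product_set:
  fixes A :: "'a::euclidean_space \<Rightarrow> real set"
  assumes [measurable]: "\<And>b. b \<in> Basis \<Longrightarrow> A b \<in> sets borel"
    and nonneg: "\<And>b. b \<in> Basis \<Longrightarrow> A b \<subseteq> {0..}"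
  shows "(\<integral>\<^sup>+y\<in>{y. \<forall>b\<in>Basis. y \<bullet> b \<in> A b}. ennreal (coord_prod y ^ m) \<partial>lborel)
    = (\<Prod>b\<in>Basis. \<integral>\<^sup>+t\<in>A b. ennreal (t ^ m) \<partial>lborel)"
proof -
  have "ennreal (coord_prod y ^ m) * indicator {y. \<forall>b\<in>Basis. y \<bullet> b \<in> A b} y
      = (\<Prod>b\<in>Basis. ennreal ((y \<bullet> b) ^ m) * indicator (A b) (y \<bullet> b))" for y :: 'a
  proof (cases "\<forall>b\<in>Basis. y \<bullet> b \<in> A b")
    case True
    with nonneg have "\<forall>b\<in>Basis. 0 \<le> y \<bullet> b" by force
    with True show ?thesis
      by (simp add: coord_prod_def prod_ennreal prod_power_distrib ennreal_power indicator_def)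
  qed (auto simp: indicator_def)
  then have "(\<integral>\<^sup>+y\<in>{y. \<forall>b\<in>Basis. y \<bullet> b \<in> A b}. ennreal (coord_prod y ^ m) \<partial>lborel)
      = (\<integral>\<^sup>+y. (\<Prod>b\<in>Basis. ennreal ((y \<bullet> b) ^ m) * indicator (A b) (y \<bullet> b)) \<partial>lborel)"
    by simp
  also have "\<dots> = (\<Prod>b\<in>Basis. \<integral>\<^sup>+t\<in>A b. ennreal (t ^ m) \<partial>lborel)"
    by (rule nn_integral_lborel_prod) auto
  finally show ?thesis .
qed

lemma nn_integral_coord_prod_power_lower_box:
  fixes x :: "'a::euclidean_space"
  assumes "\<And>b. b \<in> Basis \<Longrightarrow> 0 \<le> x \<bullet> b"
  shows "(\<integral>\<^sup>+y\<in>{y. \<forall>b\<in>Basis. y \<bullet> b \<in> {0..<x \<bullet> b}}. ennreal (coord_prod y ^ m) \<partial>lborel)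
       = ennreal (coord_prod x ^ (m+1) / (real m + 1) ^ DIM('a))"
proof -
  have "(\<integral>\<^sup>+y\<in>{y. \<forall>b\<in>Basis. y \<bullet> b \<in> {0..<x \<bullet> b}}. ennreal (coord_prod y ^ m) \<partial>lborel)
      = (\<Prod>b\<in>Basis. \<integral>\<^sup>+t\<in>{0..<x \<bullet> b}. ennreal (t ^ m) \<partial>lborel)"
    by (rule nn_integral_coord_prod_power_product_set) auto
  also have "\<dots> = (\<Prod>b\<in>Basis. ennreal ((x \<bullet> b) ^ (m+1) / (real m + 1)))"
    using assms by (simp add: nn_integral_power_Ico)
  also have "\<dots> = ennreal (coord_prod x ^ (m+1) / (real m + 1) ^ DIM('a))"
    using assms by (simp add: prod_ennreal coord_prod_def prod_dividef prod_power_distrib prod.distrib)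
  finally show ?thesis .
qed

lemma nn_integral_coord_prod_power_unit_box:
  "(\<integral>\<^sup>+y\<in>{y::'a::euclidean_space. \<forall>b\<in>Basis. y \<bullet> b \<in> {0..1}}. ennreal (coord_prod y ^ m) \<partial>lborel)
     = ennreal (1 / (real m + 1) ^ DIM('a))"
proof -
  have "(\<integral>\<^sup>+y\<in>{y::'a. \<forall>b\<in>Basis. y \<bullet> b \<in> {0..1}}. ennreal (coord_prod y ^ m) \<partial>lborel)
      = (\<Prod>b\<in>(Basis::'a set). \<integral>\<^sup>+t\<in>{0..1}. ennreal (t ^ m) \<partial>lborel)"
    by (rule nn_integral_coord_prod_power_product_set) auto
  then show ?thesis
    by (simp add: nn_integral_power_Icc ennreal_power power_one_over add.commute)
qed

lemma nn_integral_coord_prod_power_simplex: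
  "(\<integral>\<^sup>+y\<in>{y::'a::euclidean_space. (\<forall>b\<in>Basis. 0 \<le> y \<bullet> b) \<and> (\<Sum>b\<in>Basis. y \<bullet> b) \<le> 1}.
      ennreal (coord_prod y ^ m) \<partial>lborel) = ennreal (fact m ^ DIM('a) / fact (DIM('a) * (m+1)))"
proof -
  let ?S = "{y::'a. (\<forall>b\<in>Basis. 0 \<le> y \<bullet> b) \<and> (\<Sum>b\<in>Basis. y \<bullet> b) \<le> 1}"
  let ?T = "\<lambda>f. \<Sum>b\<in>(Basis::'a set). f b *\<^sub>R b"
  have coord: "?T f \<bullet> b = f b" if "b \<in> Basis" for f b
    using that by (simp add: inner_sum_left inner_Basis if_distrib cong: if_cong)
  have "(\<integral>\<^sup>+y\<in>?S. ennreal (coord_prod y ^ m) \<partial>lborel)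
      = (\<integral>\<^sup>+f. ennreal (coord_prod (?T f) ^ m) * indicator ?S (?T f) \<partial>(\<Pi>\<^sub>M b\<in>Basis. lborel))"
    by (subst lborel_eq) (simp add: nn_integral_distr)
  also have "\<dots> = (\<integral>\<^sup>+f. simplex_monomial Basis m 1 f \<partial>(\<Pi>\<^sub>M b\<in>(Basis::'a set). lborel))"
    by (intro nn_integral_cong)
      (simp add: coord coord_prod_def simplex_monomial_def indicator_def prod_power_distrib)
  also have "\<dots> = ennreal (fact m ^ DIM('a) / fact (DIM('a) * (m+1)))"
    by (simp add: nn_integral_simplex_monomial)
  finally show ?thesis .
qed

section \<open>Uniform points in a downward closed region\<close>

lemma ennreal_mult_divide:
  "0 \<le> a \<Longrightarrow> 0 \<le> b \<Longrightarrow> 0 < c \<Longrightarrow> ennreal a * ennreal b / ennreal c = ennreal (a * b / c)"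
  by (simp add: ennreal_mult[symmetric] divide_ennreal)

lemma Basis_vec_eq_range_axis: "(Basis :: (real^'d) set) = range (\<lambda>i. axis i 1)"
  by (auto simp: Basis_vec_def)

locale downward_closed_region =
  fixes S :: "(real^'d) set" and moment :: "nat \<Rightarrow> real"
  assumes sets_S[measurable]: "S \<in> sets borel"
    and nonneg_coords: "x \<in> S \<Longrightarrow> 0 \<le> x $ i"
    and downward_closed: "x \<in> S \<Longrightarrow> (\<And>i. 0 \<le> y $ i \<and> y $ i \<le> x $ i) \<Longrightarrow> y \<in> S"
    and moment_eq: "(\<integral>\<^sup>+x\<in>S. ennreal (coord_prod x ^ m) \<partial>lborel) = ennreal (moment m)"
    and moment_nonneg: "0 \<le> moment m"
    and volume_pos: "0 < moment 0"
begin

lemma emeasure_S: "emeasure lborel S = ennreal (moment 0)"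
  using moment_eq[of 0] by simp

sublocale record_model "uniform_measure lborel S"
proof (intro record_model.intro record_model_axioms.intro)
  show "prob_space (uniform_measure lborel S)"
    using emeasure_S volume_pos by (intro prob_space_uniform_measure) auto
qed simp

lemma inner_Basis_nonneg: "x \<in> S \<Longrightarrow> b \<in> Basis \<Longrightarrow> 0 \<le> x \<bullet> b"
  using nonneg_coords by (auto simp: Basis_vec_def inner_axis)

lemma coord_prod_nonneg_S: "x \<in> S \<Longrightarrow> 0 \<le> coord_prod x"
  by (intro coord_prod_nonneg inner_Basis_nonneg)

lemma dominated_in_S:
  assumes "x \<in> S"
  shows "S \<inter> {z. dominated_by z x} = {y. \<forall>b\<in>Basis. y \<bullet> b \<in> {0..<x \<bullet> b}}"
proof -
  have "(\<forall>b\<in>Basis. y \<bullet> b \<in> {0..<x \<bullet> b}) \<longleftrightarrow> (\<forall>i. y $ i \<in> {0..<x $ i})" for y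
    by (simp add: Basis_vec_eq_range_axis inner_axis)
  then show ?thesis
    using nonneg_coords downward_closed[OF assms]
    by (auto simp: dominated_by_def less_imp_le)
qed

lemma dominated_prob_power:
  assumes "x \<in> S"
  shows "dominated_prob x ^ m = ennreal (1 / moment 0 ^ m) * ennreal (coord_prod x ^ m)"
proof -
  have "dominated_prob x = emeasure lborel (S \<inter> {z. dominated_by z x}) / emeasure lborel S"
    unfolding dominated_prob_def by (subst emeasure_uniform_measure) auto
  also have "\<dots> = ennreal (coord_prod x) / ennreal (moment 0)"
    using assms nn_integral_coord_prod_power_lower_box[of x 0] inner_Basis_nonneg
    by (simp add: dominated_in_S emeasure_S)
  finally show ?thesis
    using assms volume_pos coord_prod_nonneg_S
    by (simp add: divide_ennreal ennreal_power ennreal_mult[symmetric] power_divide)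
qed

lemma nn_integral_dominated_prob_power:
  "(\<integral>\<^sup>+x. dominated_prob x ^ m \<partial>uniform_measure lborel S) = ennreal (moment m / moment 0 ^ (m+1))"
proof -
  have "(\<integral>\<^sup>+x. dominated_prob x ^ m \<partial>uniform_measure lborel S)
      = (\<integral>\<^sup>+x\<in>S. dominated_prob x ^ m \<partial>lborel) / emeasure lborel S"
    by (rule nn_integral_uniform_measure) auto
  also have "(\<integral>\<^sup>+x\<in>S. dominated_prob x ^ m \<partial>lborel)
      = (\<integral>\<^sup>+x. ennreal (1 / moment 0 ^ m) * (ennreal (coord_prod x ^ m) * indicator S x) \<partial>lborel)"
    by (intro nn_integral_cong) (simp add: dominated_prob_power indicator_def)
  also have "\<dots> = ennreal (1 / moment 0 ^ m) * ennreal (moment m)"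
    by (simp add: nn_integral_cmult moment_eq)
  finally show ?thesis
    using volume_pos moment_nonneg by (simp add: emeasure_S ennreal_mult_divide)
qed

lemma nn_integral_dominated_prob_power_below:
  assumes "x \<in> S"
  shows "(\<integral>\<^sup>+y\<in>{y. dominated_by y x}. dominated_prob y ^ m \<partial>uniform_measure lborel S)
    = ennreal ((coord_prod x / moment 0) ^ (m+1) / (real m + 1) ^ CARD('d))"
proof -
  let ?box = "{y. \<forall>b\<in>Basis. y \<bullet> b \<in> {0..<x \<bullet> b}}"
  have "(\<integral>\<^sup>+y\<in>{y. dominated_by y x}. dominated_prob y ^ m \<partial>uniform_measure lborel S)
      = (\<integral>\<^sup>+y. dominated_prob y ^ m * indicator {y. dominated_by y x} y * indicator S y \<partial>lborel)
        / emeasure lborel S"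
    by (rule nn_integral_uniform_measure) auto
  also have "(\<integral>\<^sup>+y. dominated_prob y ^ m * indicator {y. dominated_by y x} y * indicator S y \<partial>lborel)
      = (\<integral>\<^sup>+y. ennreal (1 / moment 0 ^ m) * (ennreal (coord_prod y ^ m) * indicator ?box y) \<partial>lborel)"
  proof (intro nn_integral_cong)
    fix y
    show "dominated_prob y ^ m * indicator {y. dominated_by y x} y * indicator S y
        = ennreal (1 / moment 0 ^ m) * (ennreal (coord_prod y ^ m) * indicator ?box y)"
      using dominated_in_S[OF assms] dominated_prob_power[of y m]
      by (auto simp: indicator_def)
  qed
  also have "\<dots> = ennreal (1 / moment 0 ^ m) * ennreal (coord_prod x ^ (m+1) / (real m + 1) ^ CARD('d))"
  proof -
    have box: "(\<integral>\<^sup>+y\<in>?box. ennreal (coord_prod y ^ m) \<partial>lborel) = ennreal (coord_prod x ^ (m+1) / (real m + 1) ^ CARD('d))"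
      using nn_integral_coord_prod_power_lower_box[of x m] assms inner_Basis_nonneg by simp
    show ?thesis
      unfolding box[symmetric] by (rule nn_integral_cmult) measurable
  qed
  finally show ?thesis
    using assms volume_pos coord_prod_nonneg_S
    by (simp add: emeasure_S ennreal_mult_divide power_divide)
qed

lemma nn_integral_record_pair_kernel:
  assumes "1 \<le> j" "j < k"
  shows "(\<integral>\<^sup>+x. dominated_prob x ^ (k-1-j)
      * (\<integral>\<^sup>+y\<in>{y. dominated_by y x}. dominated_prob y ^ (j-1) \<partial>uniform_measure lborel S)
      \<partial>uniform_measure lborel S) = ennreal (moment (k-1) / moment 0 ^ k / real j ^ CARD('d))"
proof -
  have pointwise: "dominated_prob x ^ (k-1-j)
      * (\<integral>\<^sup>+y\<in>{y. dominated_by y x}. dominated_prob y ^ (j-1) \<partial>uniform_measure lborel S)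
      = dominated_prob x ^ (k-1) * ennreal (1 / real j ^ CARD('d))" if x: "x \<in> S" for x
  proof -
    let ?r = "coord_prod x / moment 0"
    have r: "0 \<le> ?r" using x volume_pos coord_prod_nonneg_S by simp
    have "dominated_prob x ^ (k-1-j) * ennreal (?r ^ j / real j ^ CARD('d))
        = ennreal (?r ^ (k-1-j) * ?r ^ j * (1 / real j ^ CARD('d)))"
      using x r volume_pos coord_prod_nonneg_S[OF x]
      by (simp add: dominated_prob_power ennreal_mult[symmetric] power_divide)
    also have "?r ^ (k-1-j) * ?r ^ j = ?r ^ (k-1)"
      using assms by (simp flip: power_add)
    finally show ?thesis
      using x r assms volume_pos coord_prod_nonneg_S[OF x]
      by (simp add: nn_integral_dominated_prob_power_below dominated_prob_power ennreal_mult[symmetric] power_divide)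
  qed
  have "AE x in uniform_measure lborel S. dominated_prob x ^ (k-1-j)
      * (\<integral>\<^sup>+y\<in>{y. dominated_by y x}. dominated_prob y ^ (j-1) \<partial>uniform_measure lborel S)
      = dominated_prob x ^ (k-1) * ennreal (1 / real j ^ CARD('d))"
    by (intro AE_uniform_measureI AE_I2 impI pointwise) simp_all
  then have "(\<integral>\<^sup>+x. dominated_prob x ^ (k-1-j)
      * (\<integral>\<^sup>+y\<in>{y. dominated_by y x}. dominated_prob y ^ (j-1) \<partial>uniform_measure lborel S)
      \<partial>uniform_measure lborel S)
      = (\<integral>\<^sup>+x. dominated_prob x ^ (k-1) * ennreal (1 / real j ^ CARD('d)) \<partial>uniform_measure lborel S)"
    by (rule nn_integral_cong_AE)
  also have "\<dots> = (\<integral>\<^sup>+x. dominated_prob x ^ (k-1) \<partial>uniform_measure lborel S) * ennreal (1 / real j ^ CARD('d))"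
    by (rule nn_integral_multc) measurable
  also have "\<dots> = ennreal (moment (k-1) / moment 0 ^ k / real j ^ CARD('d))"
    using assms volume_pos moment_nonneg
    by (simp add: nn_integral_dominated_prob_power ennreal_mult[symmetric])
  finally show ?thesis .
qed

lemma rec_mean_var_uniform:
  assumes c: "\<And>k. 1 \<le> k \<Longrightarrow> moment (k-1) / moment 0 ^ k = c k"
  shows "rec_mean (iid_uniform n S) n = (\<Sum>k=1..n. c k)
    \<and> rec_var (iid_uniform n S) n =
        2 * (\<Sum>k=2..n. c k * gen_harm CARD('d) (k - 1)) + (\<Sum>k=1..n. c k) - (\<Sum>k=1..n. c k)\<^sup>2"
  unfolding iid_uniform_def
proof (rule rec_mean_var_sample)
  show "(\<integral>\<^sup>+x. dominated_prob x ^ (k-1) \<partial>uniform_measure lborel S) = ennreal (c k)" if "1 \<le> k" for k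
    using that nn_integral_dominated_prob_power[of "k-1"] c[OF that] by simp
  show "0 \<le> c k" if "1 \<le> k" for k
    using c[OF that] moment_nonneg volume_pos by (metis divide_nonneg_pos zero_less_power)
  show "(\<integral>\<^sup>+x. dominated_prob x ^ (k-1-j)
      * (\<integral>\<^sup>+y\<in>{y. dominated_by y x}. dominated_prob y ^ (j-1) \<partial>uniform_measure lborel S)
      \<partial>uniform_measure lborel S) = ennreal (c k / real j ^ CARD('d))" if "1 \<le> j" "j < k" for j k
  proof -
    have "1 \<le> k" using that by linarith
    with nn_integral_record_pair_kernel[OF that] show ?thesis by (simp only: c)
  qed
qed

end

section \<open>The simplex and the cube\<close>

lemma sum_Basis_vec: "(\<Sum>b\<in>(Basis :: (real^'d) set). x \<bullet> b) = (\<Sum>i\<in>UNIV. x $ i)"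
proof -
  have "inj (\<lambda>i::'d. axis i (1::real))"
    by (auto simp: inj_on_def axis_eq_axis)
  then show ?thesis
    by (simp add: Basis_vec_eq_range_axis sum.reindex inner_axis)
qed

lemma std_simplex_eq_Basis:
  "std_simplex = {y::real^'d. (\<forall>b\<in>Basis. 0 \<le> y \<bullet> b) \<and> (\<Sum>b\<in>Basis. y \<bullet> b) \<le> 1}"
  unfolding std_simplex_def sum_Basis_vec by (simp add: Basis_vec_eq_range_axis inner_axis)

lemma unit_cube_eq_Basis: "unit_cube = {y::real^'d. \<forall>b\<in>Basis. y \<bullet> b \<in> {0..1}}"
  by (simp add: unit_cube_def Basis_vec_eq_range_axis inner_axis)

lemma downward_closed_region_std_simplex:
  "downward_closed_region (std_simplex :: (real^'d) set) (\<lambda>m. fact m ^ CARD('d) / fact (CARD('d) * (m+1)))"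
proof -
  have "y \<in> std_simplex" if "x \<in> std_simplex" "\<forall>i. 0 \<le> y $ i \<and> y $ i \<le> x $ i" for x y :: "real^'d"
  proof -
    have "(\<Sum>i\<in>UNIV. y $ i) \<le> (\<Sum>i\<in>UNIV. x $ i)"
      using that(2) by (intro sum_mono) auto
    with that show ?thesis
      by (simp add: std_simplex_def)
  qed
  then show ?thesis
    unfolding downward_closed_region_def
    using nn_integral_coord_prod_power_simplex[where 'a="real^'d", folded std_simplex_eq_Basis]
    by (auto simp: std_simplex_def)
qed

lemma downward_closed_region_unit_cube:
  "downward_closed_region (unit_cube :: (real^'d) set) (\<lambda>m. 1 / (real m + 1) ^ CARD('d))"
  unfolding downward_closed_region_def
  using nn_integral_coord_prod_power_unit_box[where 'a="real^'d", folded unit_cube_eq_Basis]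
  by (auto simp: unit_cube_def intro: order_trans)

lemma gen_harm_square:
  "(gen_harm d n)\<^sup>2 = gen_harm (2 * d) n + 2 * (\<Sum>k=2..n. 1 / real k ^ d * gen_harm d (k - 1))"
proof (induction n)
  case (Suc n)
  have "(1 / real (Suc n) ^ d)\<^sup>2 = 1 / real (Suc n) ^ (2 * d)"
    by (simp add: power_mult_distrib power_mult power_one_over mult.commute[of 2 d] flip: power_mult)
  moreover have "(\<Sum>k=2..Suc n. f k) = (\<Sum>k=2..n. f k) + (if n = 0 then 0 else f (Suc n))" for f :: "nat \<Rightarrow> real"
    by simp
  ultimately show ?case
    using Suc by (simp add: gen_harm_def power2_eq_square algebra_simps)
qed (simp add: gen_harm_def)

lemma Gamma_record_coefficient_eq_fact:
  fixes d k :: nat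
  assumes "1 \<le> k"
  shows "fact d ^ k * Gamma (real k) ^ d / Gamma (real (d * k) + 1) = (fact d ^ k * fact (k-1) ^ d / fact (d * k) :: real)"
proof -
  have "Gamma (real k) = fact (k-1)"
    using Gamma_fact[of "k-1", where 'a=real] assms by (simp add: of_nat_diff)
  moreover have "Gamma (real (d * k) + 1) = fact (d * k)"
    using Gamma_fact[of "d*k", where 'a=real] by (simp add: add.commute)
  ultimately show ?thesis
    by simp
qed

theorem theorem5:
  fixes n :: nat
  defines "d \<equiv> CARD('d::finite)"
  defines "a \<equiv> (\<lambda>k::nat. fact d ^ k * Gamma (real k) ^ d / Gamma (real (d * k) + 1) :: real)"
  shows "rec_mean (iid_uniform n (std_simplex :: (real^'d) set)) n = (\<Sum>k=1..n. a k)
     \<and> rec_var (iid_uniform n (std_simplex :: (real^'d) set)) n =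
         2 * (\<Sum>k=2..n. a k * gen_harm d (k - 1)) + (\<Sum>k=1..n. a k) - (\<Sum>k=1..n. a k)\<^sup>2
     \<and> rec_mean (iid_uniform n (unit_cube :: (real^'d) set)) n = gen_harm d n
     \<and> rec_var (iid_uniform n (unit_cube :: (real^'d) set)) n = gen_harm d n - gen_harm (2 * d) n"
proof -
  interpret simplex: downward_closed_region "std_simplex :: (real^'d) set" "\<lambda>m. fact m ^ d / fact (d * (m+1))"
    unfolding d_def by (rule downward_closed_region_std_simplex)
  interpret cube: downward_closed_region "unit_cube :: (real^'d) set" "\<lambda>m. 1 / (real m + 1) ^ d"
    unfolding d_def by (rule downward_closed_region_unit_cube)
  have "fact (k-1) ^ d / fact (d * (k-1+1)) / (fact 0 ^ d / fact (d * (0+1))) ^ k = a k" if "1 \<le> k" for k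
    using Gamma_record_coefficient_eq_fact[OF that, of d] that by (simp add: a_def power_one_over field_simps)
  note simplex = simplex.rec_mean_var_uniform[of a n, OF this, folded d_def]
  have "1 / (real (k-1) + 1) ^ d / (1 / (real 0 + 1) ^ d) ^ k = 1 / real k ^ d" if "1 \<le> k" for k
    using that by (simp add: of_nat_diff)
  note cube = cube.rec_mean_var_uniform[of "\<lambda>k. 1 / real k ^ d" n, OF this, folded d_def]
  show ?thesis
    using simplex cube gen_harm_square[of d n] by (simp add: gen_harm_def)
qed

end
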